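(* Let $c^{(k)}$ be an admissible control and $\rho^{(k)}$ the corresponding solution of the master equation. Let $c^{(k+1)}=(u^{(k+1)},n_1^{(k+1)},n_2^{(k+1)})$ be an admissible control and $\chi^{(k+1)}$ the solution of the adjoint system with control $c^{(k+1)}$ such that for every $t\in[0,T]$: $u^{(k+1)}(t)\in\arg\max_{|u|\le\mu}\mathcal K^u(\chi^{(k+1)}(t),\rho^{(k)}(t))\,u$ and $n_j^{(k+1)}(t)\in\arg\max_{n_j\in[0,n_{\max}]}\mathcal K^{n_j}(\chi^{(k+1)}(t),\rho^{(k)}(t))\,n_j$, $j=1,2$. Then $\langle\mathcal K^c(\chi^{(k+1)}(t),\rho^{(k)}(t)),c^{(k+1)}(t)-c^{(k)}(t)\rangle\ge0$ for all $t\in[0,T]$ and $J_1(c^{(k+1)})\ge J_1(c^{(k)})$. Moreover $J_1(c^{(k+1)})>J_1(c^{(k)})$ if at least one of the sets $\{t: u^{(k+1)}(t)\ne u^{(k)}(t),\ \mathcal K^u(\chi^{(k+1)}(t),\rho^{(k)}(t))\ne0\}$, $\{t: n_j^{(k+1)}(t)\ne n_j^{(k)}(t),\ \mathcal K^{n_j}(\chi^{(k+1)}(t),\rho^{(k)}(t))\ne0\}$ ($j=1,2$) has positive Lebesgue measure.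
   Context: Let $\sigma_x,\sigma_y,\sigma_z$ be the Pauli matrices, $\mathbb I_2,\mathbb I_4$ identity matrices, $\sigma^+=\begin{pmatrix}0&0\\1&0\end{pmatrix}$, $\sigma^-=\begin{pmatrix}0&1\\0&0\end{pmatrix}$, $\sigma_1^\pm=\sigma^\pm\otimes\mathbb I_2$, $\sigma_2^\pm=\mathbb I_2\otimes\sigma^\pm$, $W_1=\sigma_z\otimes\mathbb I_2$, $W_2=\mathbb I_2\otimes\sigma_z$. Fix parameters $\varepsilon,\omega_j,\Lambda_j,\Omega_j>0$ ($j=1,2$), $H_0=\frac{\omega_1}{2}W_1+\frac{\omega_2}{2}W_2$, and a Hermitian $4\times4$ matrix $V$ (in the paper $V=Q_1\otimes\mathbb I_2+\mathbb I_2\otimes Q_2$ or $V=Q_1\otimes Q_2$ with $Q_j=\sin\theta_j\cos\varphi_j\sigma_x+\sin\theta_j\sin\varphi_j\sigma_y+\cos\theta_j\sigma_z$). For $c=(u,n_1,n_2)\in\mathbb R^3$ let $H_c=H_0+\varepsilon\sum_{j=1}^2\Lambda_j n_jW_j+uV$ and $$\mathcal L^D_n(\rho)=\sum_{j=1}^2\Big[\Omega_j(n_j+1)\big(2\sigma_j^-\rho\sigma_j^+-\{\sigma_j^+\sigma_j^-,\rho\}\big)+\Omega_jn_j\big(2\sigma_j^+\rho\sigma_j^--\{\sigma_j^-\sigma_j^+,\rho\}\big)\Big],$$ $$\mathcal L^{D,\dagger}_n(\chi)=\sum_{j=1}^2\Big[\Omega_j(n_j+1)\big(2\sigma_j^+\chi\sigma_j^--\{\sigma_j^+\sigma_j^-,\chi\}\big)+\Omega_jn_j\big(2\sigma_j^-\chi\sigma_j^+-\{\sigma_j^-\sigma_j^+,\chi\}\big)\Big],$$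 where $\{A,B\}=AB+BA$, $[A,B]=AB-BA$. Fix $T>0$, $\mu,n_{\max}>0$, $Q=[-\mu,\mu]\times[0,n_{\max}]^2$; admissible controls are piecewise continuous $c=(u,n_1,n_2):[0,T]\to Q$. Fix density matrices $\rho_0,\rho_{\rm target}$ ($4\times 4$, positive semidefinite, trace one). The master equation is $\dot\rho(t)=-i[H_{c(t)},\rho(t)]+\varepsilon\mathcal L^D_{n(t)}(\rho(t))$, $\rho(0)=\rho_0$; the adjoint system is $\dot\chi(t)=-i[H_{c(t)},\chi(t)]-\varepsilon\mathcal L^{D,\dagger}_{n(t)}(\chi(t))$, $\chi(T)=\rho_{\rm target}$ (solved backward). For matrices, $\langle A,B\rangle={\rm Tr}(A^\dagger B)$. The objective is $J_1(c)={\rm Tr}(\rho(T)\rho_{\rm target})$ where $\rho$ solves the master equation with control $c$. The switching functions $\mathcal K^c=(\mathcal K^u,\mathcal K^{n_1},\mathcal K^{n_2})$ are the coefficients of $u,n_1,n_2$ in $\langle\chi,-i[H_c,\rho]+\varepsilon\mathcal L^D_n(\rho)\rangle$: $\mathcal K^u(\chi,\rho)=\langle\chi,-i[V,\rho]\rangle$, $\mathcal K^{n_j}(\chi,\rho)=\big\langle\chi,-i\varepsilon\Lambda_j[W_j,\rho]+\varepsilon\Omega_j\big(2\sigma_j^-\rho\sigma_j^++2\sigma_j^+\rho\sigma_j^--2\rho\big)\big\rangle$, $j=1,2$ (real for Hermitian $\chi,\rho$). *)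

theory Defs
  imports "HOL-Analysis.Analysis" "HOL-Library.Numeral_Type"
begin

text \<open>Two-qubit setting. 2x2 complex matrices are indexed by the two-element type 2
  (index 0 = first basis vector, index 1 = second); 4x4 matrices are indexed by
  2 \<times> 2, so that the Kronecker product has its standard meaning.\<close>

type_synonym mat2 = "complex^2^2"
type_synonym mat4 = "complex^(2\<times>2)^(2\<times>2)"

definition mat2_of :: "complex \<Rightarrow> complex \<Rightarrow> complex \<Rightarrow> complex \<Rightarrow> mat2" where
  "mat2_of a b c d = (\<chi> i j. if i = 0 then (if j = 0 then a else b) else (if j = 0 then c else d))"

definition sigma_x :: mat2 where "sigma_x = mat2_of 0 1 1 0"
definition sigma_y :: mat2 where "sigma_y = mat2_of 0 (- \<i>) \<i> 0"
definition sigma_z :: mat2 where "sigma_z = mat2_of 1 0 0 (-1)"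
definition sigma_plus :: mat2 where "sigma_plus = mat2_of 0 0 1 0"
definition sigma_minus :: mat2 where "sigma_minus = mat2_of 0 1 0 0"

definition kron :: "mat2 \<Rightarrow> mat2 \<Rightarrow> mat4" where
  "kron A B = (\<chi> p q. A $ fst p $ fst q * B $ snd p $ snd q)"

definition madj :: "mat4 \<Rightarrow> mat4" where "madj A = (\<chi> i j. cnj (A $ j $ i))"
definition cscale :: "complex \<Rightarrow> mat4 \<Rightarrow> mat4" where "cscale z A = (\<chi> i j. z * A $ i $ j)"
definition comm :: "mat4 \<Rightarrow> mat4 \<Rightarrow> mat4" where "comm A B = A ** B - B ** A"
definition acomm :: "mat4 \<Rightarrow> mat4 \<Rightarrow> mat4" where "acomm A B = A ** B + B ** A"
definition minner :: "mat4 \<Rightarrow> mat4 \<Rightarrow> complex" where "minner A B = trace (madj A ** B)"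

definition hermitian :: "mat4 \<Rightarrow> bool" where "hermitian A \<longleftrightarrow> madj A = A"

definition density_matrix :: "mat4 \<Rightarrow> bool" where
  "density_matrix A \<longleftrightarrow> hermitian A \<and>
     (\<forall>x :: complex^(2\<times>2). 0 \<le> Re (\<Sum>i\<in>UNIV. \<Sum>j\<in>UNIV. cnj (x $ i) * A $ i $ j * x $ j)) \<and> trace A = 1"

definition sig_p :: "nat \<Rightarrow> mat4" where
  "sig_p j = (if j = 1 then kron sigma_plus (mat 1) else kron (mat 1) sigma_plus)"
definition sig_m :: "nat \<Rightarrow> mat4" where
  "sig_m j = (if j = 1 then kron sigma_minus (mat 1) else kron (mat 1) sigma_minus)"
definition Wop :: "nat \<Rightarrow> mat4" where
  "Wop j = (if j = 1 then kron sigma_z (mat 1) else kron (mat 1) sigma_z)"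

record qsys =
  eps :: real
  omg :: "nat \<Rightarrow> real"
  Lam :: "nat \<Rightarrow> real"
  Omg :: "nat \<Rightarrow> real"
  Vop :: mat4

definition params_ok :: "qsys \<Rightarrow> bool" where
  "params_ok P \<longleftrightarrow> eps P > 0 \<and> (\<forall>j\<in>{1,2}. omg P j > 0 \<and> Lam P j > 0 \<and> Omg P j > 0)
                   \<and> hermitian (Vop P)"

type_synonym ctrl = "real \<times> real \<times> real"

definition cu :: "ctrl \<Rightarrow> real" where "cu c = fst c"
definition cn :: "ctrl \<Rightarrow> nat \<Rightarrow> real" where
  "cn c j = (if j = 1 then fst (snd c) else snd (snd c))"

definition H0 :: "qsys \<Rightarrow> mat4" where
  "H0 P = (omg P 1 / 2) *\<^sub>R Wop 1 + (omg P 2 / 2) *\<^sub>R Wop 2"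

definition Hc :: "qsys \<Rightarrow> ctrl \<Rightarrow> mat4" where
  "Hc P c = H0 P + eps P *\<^sub>R (\<Sum>j\<in>{1,2}. (Lam P j * cn c j) *\<^sub>R Wop j) + cu c *\<^sub>R Vop P"

definition LD :: "qsys \<Rightarrow> ctrl \<Rightarrow> mat4 \<Rightarrow> mat4" where
  "LD P c \<rho> = (\<Sum>j\<in>{1,2}.
      (Omg P j * (cn c j + 1)) *\<^sub>R (2 *\<^sub>R (sig_m j ** \<rho> ** sig_p j) - acomm (sig_p j ** sig_m j) \<rho>)
    + (Omg P j * cn c j) *\<^sub>R (2 *\<^sub>R (sig_p j ** \<rho> ** sig_m j) - acomm (sig_m j ** sig_p j) \<rho>))"

definition LD_adj :: "qsys \<Rightarrow> ctrl \<Rightarrow> mat4 \<Rightarrow> mat4" where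
  "LD_adj P c X = (\<Sum>j\<in>{1,2}.
      (Omg P j * (cn c j + 1)) *\<^sub>R (2 *\<^sub>R (sig_p j ** X ** sig_m j) - acomm (sig_p j ** sig_m j) X)
    + (Omg P j * cn c j) *\<^sub>R (2 *\<^sub>R (sig_m j ** X ** sig_p j) - acomm (sig_m j ** sig_p j) X))"

definition master_rhs :: "qsys \<Rightarrow> ctrl \<Rightarrow> mat4 \<Rightarrow> mat4" where
  "master_rhs P c \<rho> = cscale (- \<i>) (comm (Hc P c) \<rho>) + eps P *\<^sub>R LD P c \<rho>"

definition adjoint_rhs :: "qsys \<Rightarrow> ctrl \<Rightarrow> mat4 \<Rightarrow> mat4" where
  "adjoint_rhs P c X = cscale (- \<i>) (comm (Hc P c) X) - eps P *\<^sub>R LD_adj P c X"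

definition piecewise_continuous :: "real \<Rightarrow> (real \<Rightarrow> 'a::topological_space) \<Rightarrow> bool" where
  "piecewise_continuous T f \<longleftrightarrow> (\<exists>S. finite S \<and>
      (\<forall>t\<in>{0..T} - S. continuous (at t within {0..T}) f) \<and>
      (\<forall>s\<in>S. (0 < s \<and> s \<le> T \<longrightarrow> (\<exists>l. (f \<longlongrightarrow> l) (at_left s))) \<and>
              (0 \<le> s \<and> s < T \<longrightarrow> (\<exists>l. (f \<longlongrightarrow> l) (at_right s)))))"

definition admissible :: "real \<Rightarrow> real \<Rightarrow> real \<Rightarrow> (real \<Rightarrow> ctrl) \<Rightarrow> bool" where
  "admissible T \<mu> nmax c \<longleftrightarrow> piecewise_continuous T c \<and>
     (\<forall>t\<in>{0..T}. \<bar>cu (c t)\<bar> \<le> \<mu> \<and> (\<forall>j\<in>{1,2}. 0 \<le> cn (c t) j \<and> cn (c t) j \<le> nmax))"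

text \<open>Solutions (continuous on [0,T], satisfying the ODE except at finitely many times,
  namely the switching points of the piecewise continuous control).\<close>
definition master_solution ::
  "qsys \<Rightarrow> real \<Rightarrow> (real \<Rightarrow> ctrl) \<Rightarrow> mat4 \<Rightarrow> (real \<Rightarrow> mat4) \<Rightarrow> bool" where
  "master_solution P T c \<rho>0 \<rho> \<longleftrightarrow> continuous_on {0..T} \<rho> \<and> \<rho> 0 = \<rho>0 \<and>
     (\<exists>S. finite S \<and> (\<forall>t\<in>{0..T} - S.
        (\<rho> has_vector_derivative master_rhs P (c t) (\<rho> t)) (at t within {0..T})))"

definition adjoint_solution ::
  "qsys \<Rightarrow> real \<Rightarrow> (real \<Rightarrow> ctrl) \<Rightarrow> mat4 \<Rightarrow> (real \<Rightarrow> mat4) \<Rightarrow> bool" where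
  "adjoint_solution P T c \<rho>target X \<longleftrightarrow> continuous_on {0..T} X \<and> X T = \<rho>target \<and>
     (\<exists>S. finite S \<and> (\<forall>t\<in>{0..T} - S.
        (X has_vector_derivative adjoint_rhs P (c t) (X t)) (at t within {0..T})))"

definition J1_of :: "real \<Rightarrow> mat4 \<Rightarrow> (real \<Rightarrow> mat4) \<Rightarrow> real" where
  "J1_of T \<rho>target \<rho> = Re (trace (\<rho> T ** \<rho>target))"

definition K_u :: "qsys \<Rightarrow> mat4 \<Rightarrow> mat4 \<Rightarrow> complex" where
  "K_u P X \<rho> = minner X (cscale (- \<i>) (comm (Vop P) \<rho>))"

definition K_n :: "qsys \<Rightarrow> nat \<Rightarrow> mat4 \<Rightarrow> mat4 \<Rightarrow> complex" where
  "K_n P j X \<rho> = minner X (cscale (- \<i>) ((eps P * Lam P j) *\<^sub>R comm (Wop j) \<rho>)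
      + (eps P * Omg P j) *\<^sub>R (2 *\<^sub>R (sig_m j ** \<rho> ** sig_p j) + 2 *\<^sub>R (sig_p j ** \<rho> ** sig_m j) - 2 *\<^sub>R \<rho>))"

end

theory Submission
  imports Defs
begin

text \<open>
  The pairing \<open>\<langle>\<chi>, \<rho>\<rangle>\<close> of a solution \<open>\<rho>\<close> of the master equation with a solution \<open>\<chi>\<close>
  of the adjoint system is governed by the duality \<open>\<langle>A\<^sub>c \<chi>, \<rho>\<rangle> = -\<langle>\<chi>, L\<^sub>c \<rho>\<rangle>\<close> between the
  adjoint generator \<open>A\<close> and the master generator \<open>L\<close>, and \<open>L\<^sub>c\<close> is affine in the control
  with the switching functions as coefficients.  Hence, for \<open>\<chi>\<close> the adjoint state of the new
  control, the pairing is conserved along the new trajectory and changes at rate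
  \<open>-\<langle>K\<^sup>c, c\<^sub>n\<^sub>e\<^sub>w - c\<^sub>o\<^sub>l\<^sub>d\<rangle>\<close> along the old one.  Both trajectories start at \<open>\<rho>\<^sub>0\<close> and
  \<open>\<chi>(T) = \<rho>\<^sub>t\<^sub>a\<^sub>r\<^sub>g\<^sub>e\<^sub>t\<close>, so the increase of \<open>J\<^sub>1\<close> is the integral over \<open>[0,T]\<close> of
  \<open>\<langle>K\<^sup>c, c\<^sub>n\<^sub>e\<^sub>w - c\<^sub>o\<^sub>l\<^sub>d\<rangle>\<close>, which is nonnegative term by term by the arg-max choice.
  For the strict increase, the old state and the adjoint state stay Hermitian (their
  anti-Hermitian parts solve linear equations and vanish at one end of the interval, hence
  vanish by Gronwall's argument), so the switching functions are real and the integrand is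
  positive wherever a control component changes against a nonzero switching function.
\<close>

section \<open>Real analysis\<close>

lemma has_integral_of_vector_derivative_within:
  fixes f :: "real \<Rightarrow> 'a::banach"
  assumes "a \<le> b" "finite S" "continuous_on {a..b} f"
    and "\<And>x. x \<in> {a..b} - S \<Longrightarrow> (f has_vector_derivative f' x) (at x within {a..b})"
  shows "(f' has_integral (f b - f a)) {a..b}"
proof (rule fundamental_theorem_of_calculus_interior_strong[OF assms(2,1) _ assms(3)])
  fix x assume x: "x \<in> {a<..<b} - S"
  then have "(f has_vector_derivative f' x) (at x within {a..b})"
    using assms(4) by auto
  moreover have "at x within {a..b} = at x"
    using x by (intro at_within_Icc_at) auto
  ultimately show "(f has_vector_derivative f' x) (at x)"
    by simp
qed

lemma nondecreasing_of_derivative_nonneg: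
  fixes \<phi> :: "real \<Rightarrow> real"
  assumes "finite S" and cont: "continuous_on {a..b} \<phi>"
    and der: "\<And>x. x \<in> {a..b} - S \<Longrightarrow> (\<phi> has_real_derivative \<phi>' x) (at x within {a..b})"
    and nonneg: "\<And>x. x \<in> {a..b} - S \<Longrightarrow> 0 \<le> \<phi>' x"
    and st: "a \<le> s" "s \<le> t" "t \<le> b"
  shows "\<phi> s \<le> \<phi> t"
proof -
  let ?\<phi>' = "\<lambda>x. if x \<in> S then 0 else \<phi>' x"
  have int: "(?\<phi>' has_integral (\<phi> t - \<phi> s)) {s..t}"
  proof (rule has_integral_of_vector_derivative_within[OF \<open>s \<le> t\<close> \<open>finite S\<close>])
    show "continuous_on {s..t} \<phi>"
      using st by (intro continuous_on_subset[OF cont]) auto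
    fix x assume x: "x \<in> {s..t} - S"
    then have "(\<phi> has_real_derivative \<phi>' x) (at x within {s..t})"
      using st by (intro has_field_derivative_subset[OF der]) auto
    then show "(\<phi> has_vector_derivative ?\<phi>' x) (at x within {s..t})"
      using x by (simp add: has_real_derivative_iff_has_vector_derivative)
  qed
  have "0 \<le> ?\<phi>' x" if "x \<in> {s..t}" for x
    using nonneg[of x] that st by simp
  from has_integral_nonneg[OF int this] show ?thesis
    by simp
qed

lemma weighted_inner_self_nondecreasing:
  fixes D :: "real \<Rightarrow> 'a::{real_inner,banach}"
  assumes "finite S" and cont: "continuous_on {a..b} D"
    and der: "\<And>t. t \<in> {a..b} - S \<Longrightarrow> (D has_vector_derivative D' t) (at t within {a..b})"
    and bound: "\<And>t. t \<in> {a..b} - S \<Longrightarrow> norm (D' t) \<le> C * norm (D t)"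
    and s: "s = 1 \<or> s = -1" and xy: "a \<le> x" "x \<le> y" "y \<le> b"
  shows "s * exp (2 * s * C * x) * (D x \<bullet> D x) \<le> s * exp (2 * s * C * y) * (D y \<bullet> D y)"
proof (rule nondecreasing_of_derivative_nonneg[OF \<open>finite S\<close> _ _ _ xy, where
      \<phi>' = "\<lambda>x. s * exp (2 * s * C * x) * (2 * s * C * (D x \<bullet> D x) + 2 * (D x \<bullet> D' x))"])
  show "continuous_on {a..b} (\<lambda>x. s * exp (2 * s * C * x) * (D x \<bullet> D x))"
    by (intro continuous_intros cont)
  fix x assume x: "x \<in> {a..b} - S"
  have "((\<lambda>x. D x \<bullet> D x) has_vector_derivative (D x \<bullet> D' x + D' x \<bullet> D x)) (at x within {a..b})"
    by (rule bounded_bilinear.has_vector_derivative[OF bounded_bilinear_inner der[OF x] der[OF x]])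
  then have "((\<lambda>x. D x \<bullet> D x) has_real_derivative 2 * (D x \<bullet> D' x)) (at x within {a..b})"
    by (simp add: has_real_derivative_iff_has_vector_derivative inner_commute)
  then show "((\<lambda>x. s * exp (2 * s * C * x) * (D x \<bullet> D x)) has_real_derivative
      s * exp (2 * s * C * x) * (2 * s * C * (D x \<bullet> D x) + 2 * (D x \<bullet> D' x))) (at x within {a..b})"
    by (auto intro!: derivative_eq_intros simp: algebra_simps)
  have "\<bar>D x \<bullet> D' x\<bar> \<le> norm (D x) * norm (D' x)"
    by (rule Cauchy_Schwarz_ineq2)
  also have "\<dots> \<le> norm (D x) * (C * norm (D x))"
    by (rule mult_left_mono[OF bound[OF x] norm_ge_zero])
  also have "\<dots> = C * (D x \<bullet> D x)"
    by (simp add: power2_norm_eq_inner[symmetric] power2_eq_square)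
  finally have "0 \<le> s * (2 * s * C * (D x \<bullet> D x) + 2 * (D x \<bullet> D' x))"
    using s by (auto simp: abs_le_iff)
  then show "0 \<le> s * exp (2 * s * C * x) * (2 * s * C * (D x \<bullet> D x) + 2 * (D x \<bullet> D' x))"
    by (simp add: mult.assoc mult.left_commute[of s])
qed

lemma eq_0_of_derivative_linearly_bounded:
  fixes D :: "real \<Rightarrow> 'a::{real_inner,banach}"
  assumes "finite S" and "continuous_on {a..b} D"
    and "\<And>t. t \<in> {a..b} - S \<Longrightarrow> (D has_vector_derivative D' t) (at t within {a..b})"
    and "\<And>t. t \<in> {a..b} - S \<Longrightarrow> norm (D' t) \<le> C * norm (D t)"
    and boundary: "D a = 0 \<or> D b = 0"
    and t: "t \<in> {a..b}"
  shows "D t = 0"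
proof -
  note mono = weighted_inner_self_nondecreasing[OF assms(1-4)]
  \<comment> \<open>Choose the sign \<open>s\<close> so that the nondecreasing quantity \<open>s e\<^sup>2\<^sup>s\<^sup>C\<^sup>x |D x|\<^sup>2\<close>
    vanishes at the end of the interval where \<open>D\<close> does.\<close>
  have "D t \<bullet> D t \<le> 0"
    using boundary
  proof
    assume "D a = 0"
    then show ?thesis
      using mono[of "-1" a t] t by (simp add: mult_le_0_iff)
  next
    assume "D b = 0"
    then show ?thesis
      using mono[of 1 t b] t by (simp add: mult_le_0_iff)
  qed
  then show ?thesis
    by (metis inner_eq_zero_iff inner_ge_zero order_antisym)
qed

lemma has_integral_pos_of_pos_on_positive_measure:
  fixes g :: "real \<Rightarrow> real"
  assumes int: "(g has_integral I) {a..b}" and nonneg: "\<And>x. x \<in> {a..b} \<Longrightarrow> 0 \<le> g x"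
    and E: "E \<subseteq> {x\<in>{a..b}. 0 < g x}" and pos: "0 < emeasure lebesgue E"
  shows "0 < I"
proof (rule ccontr)
  assume "\<not> 0 < I"
  then have "I = 0"
    using has_integral_nonneg[OF int nonneg] by simp
  define h where "h x = (if x \<in> {a..b} then g x else 0)" for x
  have h_nonneg: "0 \<le> h x" for x
    using nonneg by (simp add: h_def)
  have "(h has_integral 0) UNIV"
    using int \<open>I = 0\<close> has_integral_restrict_UNIV unfolding h_def by blast
  then have "h \<in> borel_measurable lebesgue" "integral\<^sup>N lebesgue h = 0"
    using has_integral_iff_nn_integral_lebesgue[of h 0] h_nonneg by auto
  then have "AE x in lebesgue. ennreal (h x) = 0"
    by (simp add: nn_integral_0_iff_AE)
  then obtain N where "{x \<in> space lebesgue. ennreal (h x) \<noteq> 0} \<subseteq> N"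
      "emeasure lebesgue N = 0" "N \<in> sets lebesgue"
    by (rule AE_E)
  then have N: "N \<in> null_sets lebesgue" "{x. 0 < h x} \<subseteq> N"
    by (auto intro: null_setsI)
  have "E \<subseteq> N"
  proof
    fix x assume "x \<in> E"
    with E have "0 < h x"
      by (auto simp: h_def)
    with N(2) show "x \<in> N"
      by auto
  qed
  then have "emeasure lebesgue E = 0"
    using N(1) by (metis emeasure_notin_sets emeasure_eq_0 null_setsD1 null_setsD2)
  then show False
    using pos by simp
qed

lemma arg_max_linear_gain_nonneg:
  fixes k x y :: real
  assumes "is_arg_max (\<lambda>v. k * v) Q x" "Q y"
  shows "0 \<le> k * (x - y)"
  using assms by (auto simp: is_arg_max_def not_less right_diff_distrib)

lemma Re_eq_0_iff_of_Reals: "z \<in> \<real> \<Longrightarrow> Re z = 0 \<longleftrightarrow> z = 0"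
  by (auto simp: complex_is_Real_iff complex_eq_iff)

section \<open>Conjugate transpose and the Hilbert--Schmidt inner product\<close>

lemma madj_nth [simp]: "madj A $ i $ j = cnj (A $ j $ i)"
  by (simp add: madj_def)

lemma cscale_nth [simp]: "cscale z A $ i $ j = z * A $ i $ j"
  by (simp add: cscale_def)

lemma madj_madj [simp]: "madj (madj A) = A"
  by (simp add: vec_eq_iff)

lemma madj_mult: "madj (A ** B) = madj B ** madj A"
  by (simp add: vec_eq_iff matrix_matrix_mult_def mult.commute)

lemma madj_add: "madj (A + B) = madj A + madj B"
  by (simp add: vec_eq_iff)

lemma madj_diff: "madj (A - B) = madj A - madj B"
  by (simp add: vec_eq_iff)

lemma madj_scaleR: "madj (r *\<^sub>R A) = r *\<^sub>R madj A"
  by (simp add: vec_eq_iff)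

lemma madj_cscale: "madj (cscale z A) = cscale (cnj z) (madj A)"
  by (simp add: vec_eq_iff)

lemma madj_sum: "madj (sum f S) = (\<Sum>x\<in>S. madj (f x))"
  by (induction S rule: infinite_finite_induct) (auto simp: madj_add vec_eq_iff)

lemma madj_comm: "madj (comm A B) = comm (madj B) (madj A)"
  by (simp add: comm_def madj_diff madj_mult)

lemma madj_acomm: "madj (acomm A B) = acomm (madj B) (madj A)"
  by (simp add: acomm_def madj_add madj_mult add.commute)

lemma trace_madj: "trace (madj A) = cnj (trace A)"
  by (simp add: trace_def)

lemma bounded_linear_madj: "bounded_linear madj"
  by (auto intro!: linearI simp: linear_conv_bounded_linear[symmetric] madj_add madj_scaleR)

lemma cscale_comm_swap: "cscale \<i> (comm B A) = cscale (- \<i>) (comm A B)"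
  by (simp add: vec_eq_iff comm_def algebra_simps)

lemma cscale_scaleR: "cscale z (r *\<^sub>R A) = r *\<^sub>R cscale z A"
  by (simp add: vec_eq_iff algebra_simps)

lemma matrix_add_rdistrib: "(A + B) ** C = A ** C + B ** (C :: 'a::semiring_1^'n^'m)"
  by (vector matrix_matrix_mult_def sum.distrib[symmetric] field_simps)

lemma comm_add_left: "comm (A + B) Y = comm A Y + comm B Y"
  by (simp add: comm_def matrix_add_rdistrib matrix_add_ldistrib algebra_simps)

lemma comm_scaleR_left: "comm (r *\<^sub>R A) Y = r *\<^sub>R comm A Y"
  by (simp add: comm_def scalar_matrix_assoc[symmetric] matrix_scalar_ac scaleR_diff_right)

lemma comm_sum_left: "comm (sum f S) Y = (\<Sum>x\<in>S. comm (f x) Y)"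
  by (induction S rule: infinite_finite_induct) (auto simp: comm_add_left comm_def[of 0])

lemma acomm_add_left: "acomm (A + B) Y = acomm A Y + acomm B Y"
  by (simp add: acomm_def matrix_add_rdistrib matrix_add_ldistrib algebra_simps)

lemma acomm_mat1: "acomm (mat 1) Y = 2 *\<^sub>R Y"
  by (simp add: acomm_def scaleR_2)

lemma minner_expand: "minner X Y = (\<Sum>i\<in>UNIV. \<Sum>k\<in>UNIV. cnj (X $ k $ i) * Y $ k $ i)"
  by (simp add: minner_def trace_def matrix_matrix_mult_def)

lemma minner_add_left: "minner (A + B) Y = minner A Y + minner B Y"
  by (simp add: minner_expand distrib_right sum.distrib)

lemma minner_add_right: "minner X (A + B) = minner X A + minner X B"
  by (simp add: minner_expand distrib_left sum.distrib)

lemma minner_diff_left: "minner (A - B) Y = minner A Y - minner B Y"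
  by (simp add: minner_expand left_diff_distrib sum_subtractf)

lemma minner_diff_right: "minner X (A - B) = minner X A - minner X B"
  by (simp add: minner_expand right_diff_distrib sum_subtractf)

lemma minner_scaleR_left: "minner (r *\<^sub>R A) Y = of_real r * minner A Y"
  by (simp add: minner_expand sum_distrib_left mult.assoc scaleR_conv_of_real[where 'a=complex])

lemma minner_scaleR_right: "minner X (r *\<^sub>R A) = of_real r * minner X A"
  by (simp add: minner_expand sum_distrib_left mult.left_commute scaleR_conv_of_real[where 'a=complex])

lemma minner_cscale_left: "minner (cscale z A) Y = cnj z * minner A Y"
  by (simp add: minner_expand sum_distrib_left mult.assoc)

lemma minner_cscale_right: "minner X (cscale z A) = z * minner X A"
  by (simp add: minner_expand sum_distrib_left mult.left_commute)

lemma minner_sum_left: "minner (sum f S) Y = (\<Sum>x\<in>S. minner (f x) Y)"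
  by (induction S rule: infinite_finite_induct) (auto simp: minner_add_left minner_expand[of 0])

lemma minner_sum_right: "minner X (sum f S) = (\<Sum>x\<in>S. minner X (f x))"
  by (induction S rule: infinite_finite_induct) (auto simp: minner_add_right minner_expand[of _ 0])

lemmas minner_linear_simps = minner_add_left minner_add_right minner_diff_left minner_diff_right
  minner_scaleR_left minner_scaleR_right minner_cscale_left minner_cscale_right
  minner_sum_left minner_sum_right

lemma bounded_bilinear_minner: "bounded_bilinear minner"
  by (auto intro!: linearI simp: bilinear_conv_bounded_bilinear[symmetric] bilinear_def
      minner_linear_simps scaleR_conv_of_real[where 'a=complex])

lemma minner_mult_left: "minner (A ** X) Y = minner X (madj A ** Y)"
  unfolding minner_def madj_mult matrix_mul_assoc ..

lemma minner_mult_right: "minner X (Y ** A) = minner (X ** madj A) Y"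
proof -
  have "minner X (Y ** A) = trace ((madj X ** Y) ** A)"
    unfolding minner_def matrix_mul_assoc ..
  also have "\<dots> = trace (A ** (madj X ** Y))"
    by (rule trace_mul_sym)
  also have "\<dots> = minner (X ** madj A) Y"
    unfolding minner_def madj_mult madj_madj matrix_mul_assoc ..
  finally show ?thesis .
qed

lemma minner_sandwich: "minner (A ** X ** B) Y = minner X (madj A ** Y ** madj B)"
  by (metis minner_mult_left minner_mult_right madj_madj matrix_mul_assoc)

lemma minner_comm_hermitian: "hermitian H \<Longrightarrow> minner (comm H X) Y = minner X (comm H Y)"
  unfolding hermitian_def comm_def minner_diff_left minner_diff_right
  by (metis minner_mult_left minner_mult_right)

lemma minner_acomm_hermitian: "hermitian H \<Longrightarrow> minner (acomm H X) Y = minner X (acomm H Y)"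
  unfolding hermitian_def acomm_def minner_add_left minner_add_right
  by (metis minner_mult_left minner_mult_right)

lemma cnj_minner: "cnj (minner X Y) = minner Y X"
  unfolding minner_def trace_madj[symmetric] madj_mult madj_madj ..

lemma minner_hermitian_real: "hermitian X \<Longrightarrow> hermitian Y \<Longrightarrow> minner X Y \<in> \<real>"
  unfolding Reals_cnj_iff cnj_minner
  by (metis hermitian_def minner_def trace_mul_sym)

lemma minner_matrix_unit: "minner (\<chi> a b. if a = k \<and> b = i then 1 else 0) A = A $ k $ i"
proof -
  have e: "(\<Sum>ka\<in>UNIV. if ka = k \<and> ia = i then A$k$i else 0) = (if ia = i then A$k$i else 0)" for ia
    by (cases "ia = i") simp_all
  show ?thesis
    by (simp add: minner_expand if_distrib[of cnj] if_distrib[of "\<lambda>z. z * _"] e cong: if_cong)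
qed

lemma minner_ext: "(\<And>Z. minner Z A = minner Z B) \<Longrightarrow> A = B"
  unfolding vec_eq_iff by (metis minner_matrix_unit)

section \<open>The generators of the master equation and of the adjoint system\<close>

lemma cases_2: "(x :: 2) = 0 \<or> x = 1"
proof -
  have "(2 :: 2) = 0" by simp
  with exhaust_2[of x] show ?thesis by auto
qed

lemma UNIV_2x2: "(UNIV :: (2 \<times> 2) set) = {(0,0), (0,1), (1,0), (1,1)}"
  using cases_2 by auto

lemma all_2x2: "(\<forall>p :: 2 \<times> 2. Q p) \<longleftrightarrow> Q (0,0) \<and> Q (0,1) \<and> Q (1,0) \<and> Q (1,1)"
  by (metis UNIV_2x2 UNIV_I insert_iff empty_iff)

lemma kron_nth [simp]: "kron A B $ p $ q = A $ fst p $ fst q * B $ snd p $ snd q"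
  by (simp add: kron_def)

lemma mat2_of_nth [simp]:
  "mat2_of a b c d $ 0 $ 0 = a" "mat2_of a b c d $ 0 $ 1 = b"
  "mat2_of a b c d $ 1 $ 0 = c" "mat2_of a b c d $ 1 $ 1 = d"
  by (simp_all add: mat2_of_def)

lemma mat1_2_nth [simp]:
  "(mat 1 :: mat2) $ 0 $ 0 = 1" "(mat 1 :: mat2) $ 0 $ 1 = 0"
  "(mat 1 :: mat2) $ 1 $ 0 = 0" "(mat 1 :: mat2) $ 1 $ 1 = 1"
  by (simp_all add: mat_def)

lemma madj_sig_p: "madj (sig_p j) = sig_m j"
  unfolding vec_eq_iff all_2x2 by (simp add: sig_p_def sig_m_def sigma_plus_def sigma_minus_def)

lemma madj_sig_m: "madj (sig_m j) = sig_p j"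
  using madj_sig_p by (metis madj_madj)

lemma hermitian_Wop: "hermitian (Wop j)"
  unfolding hermitian_def vec_eq_iff all_2x2 by (simp add: Wop_def sigma_z_def)

lemma hermitian_sig_p_sig_m: "hermitian (sig_p j ** sig_m j)" "hermitian (sig_m j ** sig_p j)"
  unfolding hermitian_def by (simp_all add: madj_mult madj_sig_p madj_sig_m)

lemma sig_p_sig_m_add: "sig_p j ** sig_m j + sig_m j ** sig_p j = mat 1"
  unfolding vec_eq_iff all_2x2
  by (simp add: matrix_matrix_mult_def UNIV_2x2 mat_def sig_p_def sig_m_def
      sigma_plus_def sigma_minus_def)

lemma acomm_sig_m_sig_p: "acomm (sig_m j ** sig_p j) Y = 2 *\<^sub>R Y - acomm (sig_p j ** sig_m j) Y"
  using acomm_add_left[of "sig_p j ** sig_m j" "sig_m j ** sig_p j" Y]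
  by (simp add: sig_p_sig_m_add acomm_mat1)

lemma hermitian_Hc: "hermitian (Vop P) \<Longrightarrow> hermitian (Hc P c)"
  using hermitian_Wop unfolding hermitian_def
  by (simp add: Hc_def H0_def madj_add madj_scaleR madj_sum)

lemma madj_master_rhs:
  assumes "hermitian (Vop P)"
  shows "madj (master_rhs P c X) = master_rhs P c (madj X)"
  using hermitian_Hc[OF assms] unfolding hermitian_def master_rhs_def LD_def
  by (simp add: madj_add madj_diff madj_scaleR madj_sum madj_mult madj_cscale madj_comm madj_acomm
      madj_sig_p madj_sig_m matrix_mul_assoc cscale_comm_swap acomm_def add.commute)

lemma madj_adjoint_rhs:
  assumes "hermitian (Vop P)"
  shows "madj (adjoint_rhs P c X) = adjoint_rhs P c (madj X)"
  using hermitian_Hc[OF assms] unfolding hermitian_def adjoint_rhs_def LD_adj_def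
  by (simp add: madj_add madj_diff madj_scaleR madj_sum madj_mult madj_cscale madj_comm madj_acomm
      madj_sig_p madj_sig_m matrix_mul_assoc cscale_comm_swap acomm_def add.commute)

lemma minner_LD_adj: "minner (LD_adj P c X) Y = minner X (LD P c Y)"
  unfolding LD_adj_def LD_def
  by (simp add: minner_linear_simps minner_sandwich minner_acomm_hermitian hermitian_sig_p_sig_m
      madj_sig_p madj_sig_m)

lemma minner_adjoint_rhs:
  assumes "hermitian (Vop P)"
  shows "minner (adjoint_rhs P c X) Y = - minner X (master_rhs P c Y)"
  unfolding adjoint_rhs_def master_rhs_def
  by (simp add: minner_linear_simps minner_comm_hermitian[OF hermitian_Hc[OF assms]] minner_LD_adj)

lemma sum_1_2: "(\<Sum>j\<in>{1,2::nat}. f j) = f 1 + f 2"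
  by simp

lemma minner_master_rhs_diff:
  "minner X (master_rhs P c Y) - minner X (master_rhs P c' Y)
     = of_real (cu c - cu c') * K_u P X Y + (\<Sum>j\<in>{1,2}. of_real (cn c j - cn c' j) * K_n P j X Y)"
  unfolding master_rhs_def K_u_def K_n_def Hc_def LD_def acomm_sig_m_sig_p
  by (simp add: minner_linear_simps comm_add_left comm_scaleR_left comm_sum_left sum_1_2 algebra_simps)

lemma minner_master_rhs_adjoint:
  assumes "hermitian (Vop P)"
  shows "minner Z (master_rhs P c X) = - minner (adjoint_rhs P c Z) X"
  by (simp add: minner_adjoint_rhs[OF assms])

lemma minner_adjoint_rhs_master:
  assumes "hermitian (Vop P)"
  shows "minner Z (adjoint_rhs P c X) = - cnj (minner X (master_rhs P c Z))"
  by (metis cnj_minner complex_cnj_minus minner_adjoint_rhs[OF assms])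

lemma linear_master_rhs: "hermitian (Vop P) \<Longrightarrow> linear (master_rhs P c)"
  by (auto intro!: linearI minner_ext
      simp: minner_master_rhs_adjoint minner_add_right minner_scaleR_right)

lemma linear_adjoint_rhs: "hermitian (Vop P) \<Longrightarrow> linear (adjoint_rhs P c)"
  by (auto intro!: linearI minner_ext
      simp: minner_adjoint_rhs_master minner_add_left minner_scaleR_left minner_add_right
        minner_scaleR_right)

definition affine_in_control :: "(ctrl \<Rightarrow> 'a \<Rightarrow> 'b::real_vector) \<Rightarrow> bool" where
  "affine_in_control F \<longleftrightarrow> (\<forall>c X. F c X = F (0,0,0) X
     + cu c *\<^sub>R (F (1,0,0) X - F (0,0,0) X)
     + cn c 1 *\<^sub>R (F (0,1,0) X - F (0,0,0) X)
     + cn c 2 *\<^sub>R (F (0,0,1) X - F (0,0,0) X))"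

lemma affine_in_controlI:
  fixes F :: "ctrl \<Rightarrow> mat4 \<Rightarrow> mat4"
  assumes "\<And>Z c X. minner Z (F c X) - minner Z (F (0,0,0) X)
             = of_real (cu c) * A Z X + of_real (cn c 1) * B Z X + of_real (cn c 2) * C Z X"
  shows "affine_in_control F"
  unfolding affine_in_control_def
proof (intro allI minner_ext)
  fix c X Z
  have shift: "minner Z (F c X) = minner Z (F (0,0,0) X)
      + (of_real (cu c) * A Z X + of_real (cn c 1) * B Z X + of_real (cn c 2) * C Z X)"
    for c using assms[of Z c X] by (simp add: algebra_simps)
  show "minner Z (F c X) = minner Z (F (0,0,0) X + cu c *\<^sub>R (F (1,0,0) X - F (0,0,0) X)
     + cn c 1 *\<^sub>R (F (0,1,0) X - F (0,0,0) X) + cn c 2 *\<^sub>R (F (0,0,1) X - F (0,0,0) X))"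
    by (simp add: minner_add_right minner_diff_right minner_scaleR_right cu_def
        shift[of c] shift[of "(1,0,0)"] shift[of "(0,1,0)"] shift[of "(0,0,1)"] cn_def algebra_simps)
qed

lemma affine_in_control_master_rhs: "affine_in_control (master_rhs P)"
  by (rule affine_in_controlI[where A = "K_u P" and B = "K_n P 1" and C = "K_n P 2"])
    (simp add: minner_master_rhs_diff sum_1_2 cu_def cn_def)

lemma affine_in_control_adjoint_rhs:
  assumes "hermitian (Vop P)"
  shows "affine_in_control (adjoint_rhs P)"
proof (rule affine_in_controlI[where A = "\<lambda>Z X. - cnj (K_u P X Z)"
      and B = "\<lambda>Z X. - cnj (K_n P 1 X Z)" and C = "\<lambda>Z X. - cnj (K_n P 2 X Z)"])
  fix Z c X
  have "minner Z (adjoint_rhs P c X) - minner Z (adjoint_rhs P (0,0,0) X)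
      = - cnj (minner X (master_rhs P c Z) - minner X (master_rhs P (0,0,0) Z))"
    by (simp add: minner_adjoint_rhs_master[OF assms])
  then show "minner Z (adjoint_rhs P c X) - minner Z (adjoint_rhs P (0,0,0) X)
      = of_real (cu c) * - cnj (K_u P X Z) + of_real (cn c 1) * - cnj (K_n P 1 X Z)
        + of_real (cn c 2) * - cnj (K_n P 2 X Z)"
    by (simp add: minner_master_rhs_diff sum_1_2 cu_def cn_def algebra_simps)
qed

lemma affine_in_control_uniform_bound:
  fixes F :: "ctrl \<Rightarrow> 'a::euclidean_space \<Rightarrow> 'b::real_normed_vector"
  assumes lin: "\<And>c. linear (F c)" and aff: "affine_in_control F"
  obtains C where
    "\<And>c X. \<bar>cu c\<bar> \<le> m \<Longrightarrow> \<bar>cn c 1\<bar> \<le> n \<Longrightarrow> \<bar>cn c 2\<bar> \<le> n \<Longrightarrow> norm (F c X) \<le> C * norm X"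
proof -
  define G where "G e = (\<lambda>X. F e X - F (0,0,0) X)" for e
  have bl: "bounded_linear (F (0,0,0))" "bounded_linear (G e)" for e
    using lin by (simp_all add: G_def linear_conv_bounded_linear[symmetric] linear_compose_sub)
  show ?thesis
  proof (rule that[of "onorm (F (0,0,0)) + \<bar>m\<bar> * onorm (G (1,0,0))
      + \<bar>n\<bar> * onorm (G (0,1,0)) + \<bar>n\<bar> * onorm (G (0,0,1))"])
    fix c X assume bounds: "\<bar>cu c\<bar> \<le> m" "\<bar>cn c 1\<bar> \<le> n" "\<bar>cn c 2\<bar> \<le> n"
    have "F c X = F (0,0,0) X + cu c *\<^sub>R G (1,0,0) X + cn c 1 *\<^sub>R G (0,1,0) X + cn c 2 *\<^sub>R G (0,0,1) X"
      using aff unfolding affine_in_control_def G_def by blast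
    then have "norm (F c X) \<le> norm (F (0,0,0) X) + \<bar>cu c\<bar> * norm (G (1,0,0) X)
        + \<bar>cn c 1\<bar> * norm (G (0,1,0) X) + \<bar>cn c 2\<bar> * norm (G (0,0,1) X)"
      by (simp only:) (intro order.trans[OF norm_triangle_ineq] add_mono order_refl; simp)+
    also have "\<dots> \<le> onorm (F (0,0,0)) * norm X + \<bar>m\<bar> * (onorm (G (1,0,0)) * norm X)
        + \<bar>n\<bar> * (onorm (G (0,1,0)) * norm X) + \<bar>n\<bar> * (onorm (G (0,0,1)) * norm X)"
      using bounds bl by (intro add_mono mult_mono onorm onorm_pos_le) auto
    finally show "norm (F c X) \<le> (onorm (F (0,0,0)) + \<bar>m\<bar> * onorm (G (1,0,0))
        + \<bar>n\<bar> * onorm (G (0,1,0)) + \<bar>n\<bar> * onorm (G (0,0,1))) * norm X"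
      by (simp add: algebra_simps)
  qed
qed

section \<open>Hermiticity of the solutions\<close>

lemma hermitian_of_madj_equivariant_ode:
  fixes X :: "real \<Rightarrow> mat4" and F :: "real \<Rightarrow> mat4 \<Rightarrow> mat4"
  assumes S: "finite S" and cont: "continuous_on {a..b} X"
    and der: "\<And>t. t \<in> {a..b} - S \<Longrightarrow> (X has_vector_derivative F t (X t)) (at t within {a..b})"
    and lin: "\<And>t. linear (F t)" and equiv: "\<And>t Y. madj (F t Y) = F t (madj Y)"
    and bound: "\<And>t Y. t \<in> {a..b} \<Longrightarrow> norm (F t Y) \<le> C * norm Y"
    and boundary: "hermitian (X a) \<or> hermitian (X b)"
    and t: "t \<in> {a..b}"
  shows "hermitian (X t)"
proof -
  define D where "D s = X s - madj (X s)" for s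
  have "D t = 0"
  proof (rule eq_0_of_derivative_linearly_bounded[OF S _ _ _ _ t, where D' = "\<lambda>s. F s (D s)"])
    show "continuous_on {a..b} D"
      unfolding D_def by (intro continuous_intros cont bounded_linear.continuous_on[OF bounded_linear_madj])
    fix s assume s: "s \<in> {a..b} - S"
    have "(D has_vector_derivative F s (X s) - madj (F s (X s))) (at s within {a..b})"
      unfolding D_def
      by (intro has_vector_derivative_diff der[OF s] bounded_linear.has_vector_derivative[OF bounded_linear_madj])
    then show "(D has_vector_derivative F s (D s)) (at s within {a..b})"
      by (simp add: D_def equiv linear_diff[OF lin])
    show "norm (F s (D s)) \<le> C * norm (D s)"
      using s bound by blast
  next
    show "D a = 0 \<or> D b = 0"
      using boundary by (auto simp: D_def hermitian_def)
  qed
  then show ?thesis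
    by (simp add: D_def hermitian_def)
qed

lemma admissible_bounds:
  assumes "admissible T \<mu> nmax c" "t \<in> {0..T}"
  shows "\<bar>cu (c t)\<bar> \<le> \<mu>" "\<bar>cn (c t) 1\<bar> \<le> nmax" "\<bar>cn (c t) 2\<bar> \<le> nmax"
  using assms by (auto simp: admissible_def)

lemma master_solution_hermitian:
  assumes hV: "hermitian (Vop P)" and adm: "admissible T \<mu> nmax c"
    and sol: "master_solution P T c \<rho>0 \<rho>" and "hermitian \<rho>0" and t: "t \<in> {0..T}"
  shows "hermitian (\<rho> t)"
proof -
  obtain C where C: "\<And>c X. \<bar>cu c\<bar> \<le> \<mu> \<Longrightarrow> \<bar>cn c 1\<bar> \<le> nmax \<Longrightarrow> \<bar>cn c 2\<bar> \<le> nmax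
      \<Longrightarrow> norm (master_rhs P c X) \<le> C * norm X"
    using affine_in_control_uniform_bound[OF linear_master_rhs[OF hV] affine_in_control_master_rhs]
    by metis
  obtain S where "finite S" "continuous_on {0..T} \<rho>" "\<rho> 0 = \<rho>0"
    "\<And>t. t \<in> {0..T} - S \<Longrightarrow> (\<rho> has_vector_derivative master_rhs P (c t) (\<rho> t)) (at t within {0..T})"
    using sol unfolding master_solution_def by blast
  then show ?thesis
    using \<open>hermitian \<rho>0\<close> C admissible_bounds[OF adm]
    by (intro hermitian_of_madj_equivariant_ode[where F = "\<lambda>t. master_rhs P (c t)" and C = C, OF _ _ _
          linear_master_rhs[OF hV] madj_master_rhs[OF hV] _ _ t]) auto
qed

lemma adjoint_solution_hermitian:
  assumes hV: "hermitian (Vop P)" and adm: "admissible T \<mu> nmax c"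
    and sol: "adjoint_solution P T c \<rho>target chi" and "hermitian \<rho>target" and t: "t \<in> {0..T}"
  shows "hermitian (chi t)"
proof -
  obtain C where C: "\<And>c X. \<bar>cu c\<bar> \<le> \<mu> \<Longrightarrow> \<bar>cn c 1\<bar> \<le> nmax \<Longrightarrow> \<bar>cn c 2\<bar> \<le> nmax
      \<Longrightarrow> norm (adjoint_rhs P c X) \<le> C * norm X"
    using affine_in_control_uniform_bound[OF linear_adjoint_rhs[OF hV] affine_in_control_adjoint_rhs[OF hV]]
    by metis
  obtain S where "finite S" "continuous_on {0..T} chi" "chi T = \<rho>target"
    "\<And>t. t \<in> {0..T} - S \<Longrightarrow> (chi has_vector_derivative adjoint_rhs P (c t) (chi t)) (at t within {0..T})"
    using sol unfolding adjoint_solution_def by blast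
  then show ?thesis
    using \<open>hermitian \<rho>target\<close> C admissible_bounds[OF adm]
    by (intro hermitian_of_madj_equivariant_ode[where F = "\<lambda>t. adjoint_rhs P (c t)" and C = C, OF _ _ _
          linear_adjoint_rhs[OF hV] madj_adjoint_rhs[OF hV] _ _ t]) auto
qed

section \<open>The increment of the objective\<close>

lemma K_u_real:
  assumes "hermitian (Vop P)" "hermitian X" "hermitian Y"
  shows "K_u P X Y \<in> \<real>"
  unfolding K_u_def using assms
  by (intro minner_hermitian_real) (auto simp: hermitian_def madj_cscale madj_comm cscale_comm_swap)

lemma K_n_real:
  assumes "hermitian X" "hermitian Y"
  shows "K_n P j X Y \<in> \<real>"
  unfolding K_n_def using assms hermitian_Wop[of j]
  by (intro minner_hermitian_real)
    (auto simp: hermitian_def madj_add madj_diff madj_scaleR madj_mult madj_cscale madj_comm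
      madj_sig_p madj_sig_m matrix_mul_assoc cscale_comm_swap cscale_scaleR)

definition switching_gain :: "qsys \<Rightarrow> mat4 \<Rightarrow> mat4 \<Rightarrow> ctrl \<Rightarrow> ctrl \<Rightarrow> real" where
  "switching_gain P X Y c c' = Re (K_u P X Y) * (cu c - cu c')
     + (\<Sum>j\<in>{1,2}. Re (K_n P j X Y) * (cn c j - cn c' j))"

lemma Re_minner_master_rhs_diff:
  "Re (minner X (master_rhs P c Y) - minner X (master_rhs P c' Y)) = switching_gain P X Y c c'"
  unfolding minner_master_rhs_diff switching_gain_def by (simp add: sum_1_2 algebra_simps)

lemma J1_of_eq_minner: "hermitian \<rho>target \<Longrightarrow> J1_of T \<rho>target \<rho> = Re (minner \<rho>target (\<rho> T))"
  unfolding J1_of_def minner_def hermitian_def by (metis trace_mul_sym)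

lemma minner_solutions_has_integral:
  assumes hV: "hermitian (Vop P)" and T: "0 \<le> T"
    and sol: "master_solution P T c \<rho>0 \<rho>" and adj: "adjoint_solution P T c' \<rho>target chi"
  shows "((\<lambda>t. minner (chi t) (master_rhs P (c' t) (\<rho> t)) - minner (chi t) (master_rhs P (c t) (\<rho> t)))
           has_integral minner (chi 0) \<rho>0 - minner \<rho>target (\<rho> T)) {0..T}"
proof -
  obtain S where S: "finite S" and cont: "continuous_on {0..T} \<rho>" and init: "\<rho> 0 = \<rho>0"
    and der: "\<And>t. t \<in> {0..T} - S \<Longrightarrow> (\<rho> has_vector_derivative master_rhs P (c t) (\<rho> t)) (at t within {0..T})"
    using sol unfolding master_solution_def by blast
  obtain S' where S': "finite S'" and cont': "continuous_on {0..T} chi" and final: "chi T = \<rho>target"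
    and der': "\<And>t. t \<in> {0..T} - S' \<Longrightarrow> (chi has_vector_derivative adjoint_rhs P (c' t) (chi t)) (at t within {0..T})"
    using adj unfolding adjoint_solution_def by blast
  have "((\<lambda>t. minner (chi t) (master_rhs P (c t) (\<rho> t)) - minner (chi t) (master_rhs P (c' t) (\<rho> t)))
      has_integral minner (chi T) (\<rho> T) - minner (chi 0) (\<rho> 0)) {0..T}"
  proof (rule has_integral_of_vector_derivative_within[OF T finite_UnI[OF S S']])
    show "continuous_on {0..T} (\<lambda>t. minner (chi t) (\<rho> t))"
      by (rule bounded_bilinear.continuous_on[OF bounded_bilinear_minner cont' cont])
    fix t assume t: "t \<in> {0..T} - (S \<union> S')"
    have "((\<lambda>t. minner (chi t) (\<rho> t)) has_vector_derivative
        minner (chi t) (master_rhs P (c t) (\<rho> t)) + minner (adjoint_rhs P (c' t) (chi t)) (\<rho> t))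
        (at t within {0..T})"
      using t by (intro bounded_bilinear.has_vector_derivative[OF bounded_bilinear_minner der' der]) auto
    then show "((\<lambda>t. minner (chi t) (\<rho> t)) has_vector_derivative
        minner (chi t) (master_rhs P (c t) (\<rho> t)) - minner (chi t) (master_rhs P (c' t) (\<rho> t)))
        (at t within {0..T})"
      by (simp add: minner_adjoint_rhs[OF hV])
  qed
  from has_integral_neg[OF this] show ?thesis
    by (simp add: init final)
qed

lemma J1_increment_has_integral:
  assumes hV: "hermitian (Vop P)" and "hermitian \<rho>target" and T: "0 \<le> T"
    and sol_k: "master_solution P T ck \<rho>0 \<rho>k" and sol_k1: "master_solution P T ck1 \<rho>0 \<rho>k1"
    and adj: "adjoint_solution P T ck1 \<rho>target chi"
  shows "((\<lambda>t. switching_gain P (chi t) (\<rho>k t) (ck1 t) (ck t))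
           has_integral J1_of T \<rho>target \<rho>k1 - J1_of T \<rho>target \<rho>k) {0..T}"
proof -
  \<comment> \<open>Along the new trajectory the pairing with the adjoint state is conserved.\<close>
  have "((\<lambda>t. 0) has_integral minner (chi 0) \<rho>0 - minner \<rho>target (\<rho>k1 T)) {0..T}"
    using minner_solutions_has_integral[OF hV T sol_k1 adj] by simp
  then have "minner (chi 0) \<rho>0 - minner \<rho>target (\<rho>k1 T) = 0"
    using has_integral_unique has_integral_0 by blast
  moreover have "((\<lambda>t. switching_gain P (chi t) (\<rho>k t) (ck1 t) (ck t))
      has_integral Re (minner (chi 0) \<rho>0 - minner \<rho>target (\<rho>k T))) {0..T}"
    using has_integral_Re[OF minner_solutions_has_integral[OF hV T sol_k adj]]
    unfolding Re_minner_master_rhs_diff .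
  ultimately show ?thesis
    by (simp add: J1_of_eq_minner[OF \<open>hermitian \<rho>target\<close>])
qed

lemma switching_gain_nonneg:
  assumes "0 \<le> Re (K_u P X Y) * (cu c - cu c')"
    and "\<And>j. j \<in> {1,2} \<Longrightarrow> 0 \<le> Re (K_n P j X Y) * (cn c j - cn c' j)"
  shows "0 \<le> switching_gain P X Y c c'"
  using assms by (simp add: switching_gain_def sum_1_2 add_nonneg_nonneg)

lemma switching_gain_pos:
  assumes "hermitian (Vop P)" "hermitian X" "hermitian Y"
    and u: "0 \<le> Re (K_u P X Y) * (cu c - cu c')"
    and n: "\<And>j. j \<in> {1,2} \<Longrightarrow> 0 \<le> Re (K_n P j X Y) * (cn c j - cn c' j)"
    and change: "(cu c \<noteq> cu c' \<and> K_u P X Y \<noteq> 0) \<or> (\<exists>j\<in>{1,2}. cn c j \<noteq> cn c' j \<and> K_n P j X Y \<noteq> 0)"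
  shows "0 < switching_gain P X Y c c'"
proof -
  have n1: "0 \<le> Re (K_n P 1 X Y) * (cn c 1 - cn c' 1)" and n2: "0 \<le> Re (K_n P 2 X Y) * (cn c 2 - cn c' 2)"
    using n by auto
  have "(cu c \<noteq> cu c' \<and> Re (K_u P X Y) \<noteq> 0) \<or> (\<exists>j\<in>{1,2}. cn c j \<noteq> cn c' j \<and> Re (K_n P j X Y) \<noteq> 0)"
    using change assms(1-3) by (simp add: Re_eq_0_iff_of_Reals K_u_real K_n_real)
  then have "0 < Re (K_u P X Y) * (cu c - cu c') \<or> 0 < Re (K_n P 1 X Y) * (cn c 1 - cn c' 1)
      \<or> 0 < Re (K_n P 2 X Y) * (cn c 2 - cn c' 2)"
    using u n1 n2 by (auto simp: order_less_le)
  then show ?thesis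
    using u n1 n2 unfolding switching_gain_def sum_1_2 by (elim disjE) linarith+
qed

theorem proposition2:
  fixes P :: qsys and T \<mu> nmax :: real and \<rho>0 \<rho>target :: mat4
    and ck ck1 :: "real \<Rightarrow> ctrl" and \<rho>k \<rho>k1 chik1 :: "real \<Rightarrow> mat4"
  assumes par: "params_ok P" and T: "T > 0" and mu: "\<mu> > 0" and nmax: "nmax > 0"
    and dens0: "density_matrix \<rho>0" and denst: "density_matrix \<rho>target"
    and adm_k: "admissible T \<mu> nmax ck"
    and sol_k: "master_solution P T ck \<rho>0 \<rho>k"
    and adm_k1: "admissible T \<mu> nmax ck1"
    and adj_k1: "adjoint_solution P T ck1 \<rho>target chik1"
    and argmax_u: "\<forall>t\<in>{0..T}. is_arg_max (\<lambda>v. Re (K_u P (chik1 t) (\<rho>k t)) * v)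
                                 (\<lambda>v. \<bar>v\<bar> \<le> \<mu>) (cu (ck1 t))"
    and argmax_n: "\<forall>t\<in>{0..T}. \<forall>j\<in>{1,2}. is_arg_max (\<lambda>v. Re (K_n P j (chik1 t) (\<rho>k t)) * v)
                                 (\<lambda>v. 0 \<le> v \<and> v \<le> nmax) (cn (ck1 t) j)"
    and sol_k1: "master_solution P T ck1 \<rho>0 \<rho>k1"
  shows "(\<forall>t\<in>{0..T}.
            Re (K_u P (chik1 t) (\<rho>k t)) * (cu (ck1 t) - cu (ck t))
          + (\<Sum>j\<in>{1,2}. Re (K_n P j (chik1 t) (\<rho>k t)) * (cn (ck1 t) j - cn (ck t) j)) \<ge> 0)
       \<and> J1_of T \<rho>target \<rho>k1 \<ge> J1_of T \<rho>target \<rho>k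
       \<and> ((emeasure lebesgue {t\<in>{0..T}. cu (ck1 t) \<noteq> cu (ck t) \<and> K_u P (chik1 t) (\<rho>k t) \<noteq> 0} > 0
           \<or> (\<exists>j\<in>{1,2}. emeasure lebesgue
                 {t\<in>{0..T}. cn (ck1 t) j \<noteq> cn (ck t) j \<and> K_n P j (chik1 t) (\<rho>k t) \<noteq> 0} > 0))
          \<longrightarrow> J1_of T \<rho>target \<rho>k1 > J1_of T \<rho>target \<rho>k)"
proof -
  let ?gain = "\<lambda>t. switching_gain P (chik1 t) (\<rho>k t) (ck1 t) (ck t)"
  have hV: "hermitian (Vop P)" and herm0: "hermitian \<rho>0" and herm_target: "hermitian \<rho>target"
    using par dens0 denst by (simp_all add: params_ok_def density_matrix_def)
  have gain_u: "0 \<le> Re (K_u P (chik1 t) (\<rho>k t)) * (cu (ck1 t) - cu (ck t))" if "t \<in> {0..T}" for t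
    using argmax_u admissible_bounds[OF adm_k that] that by (blast intro: arg_max_linear_gain_nonneg)
  have gain_n: "0 \<le> Re (K_n P j (chik1 t) (\<rho>k t)) * (cn (ck1 t) j - cn (ck t) j)"
    if "t \<in> {0..T}" "j \<in> {1,2}" for t j
    using argmax_n adm_k that unfolding admissible_def by (blast intro: arg_max_linear_gain_nonneg)
  have gain_nonneg: "0 \<le> ?gain t" if "t \<in> {0..T}" for t
    using that by (intro switching_gain_nonneg gain_u gain_n)
  have gain_pos: "0 < ?gain t"
    if t: "t \<in> {0..T}" and "(cu (ck1 t) \<noteq> cu (ck t) \<and> K_u P (chik1 t) (\<rho>k t) \<noteq> 0)
        \<or> (\<exists>j\<in>{1,2}. cn (ck1 t) j \<noteq> cn (ck t) j \<and> K_n P j (chik1 t) (\<rho>k t) \<noteq> 0)" for t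
    by (rule switching_gain_pos[OF hV adjoint_solution_hermitian[OF hV adm_k1 adj_k1 herm_target t]
          master_solution_hermitian[OF hV adm_k sol_k herm0 t] gain_u[OF t] gain_n[OF t] that(2)])
  have increment: "(?gain has_integral J1_of T \<rho>target \<rho>k1 - J1_of T \<rho>target \<rho>k) {0..T}"
    using J1_increment_has_integral[OF hV herm_target _ sol_k sol_k1 adj_k1] T by simp
  show ?thesis
  proof (intro conjI impI)
    show "\<forall>t\<in>{0..T}. Re (K_u P (chik1 t) (\<rho>k t)) * (cu (ck1 t) - cu (ck t))
        + (\<Sum>j\<in>{1,2}. Re (K_n P j (chik1 t) (\<rho>k t)) * (cn (ck1 t) j - cn (ck t) j)) \<ge> 0"
      using gain_nonneg by (simp add: switching_gain_def)
    show "J1_of T \<rho>target \<rho>k \<le> J1_of T \<rho>target \<rho>k1"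
      using has_integral_nonneg[OF increment gain_nonneg] by simp
    assume "emeasure lebesgue {t\<in>{0..T}. cu (ck1 t) \<noteq> cu (ck t) \<and> K_u P (chik1 t) (\<rho>k t) \<noteq> 0} > 0
      \<or> (\<exists>j\<in>{1,2}. emeasure lebesgue
           {t\<in>{0..T}. cn (ck1 t) j \<noteq> cn (ck t) j \<and> K_n P j (chik1 t) (\<rho>k t) \<noteq> 0} > 0)"
    then obtain E where "0 < emeasure lebesgue E" "E \<subseteq> {t\<in>{0..T}. 0 < ?gain t}"
      by (elim disjE bexE) (blast intro: gain_pos)+
    then show "J1_of T \<rho>target \<rho>k < J1_of T \<rho>target \<rho>k1"
      using has_integral_pos_of_pos_on_positive_measure[OF increment gain_nonneg] by force
  qed
qed

end
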